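(* Suppose $\gamma$ is a geodesic from $(x_1,y_1)$ to $(x_2,y_2)$ with $x_2\ge x_1$. Then there exists a semi-directed, non-self-intersecting geodesic $\gamma'$ from $(x_1,y_1)$ to $(x_2,y_2)$.
   Context: Model: Let $G$ be a probability measure on $[0,\infty)$. In $\mathbb Z^2$, every vertical edge receives weight $1$ and every horizontal edge (joining $(x,y)$ and $(x+1,y)$) receives a non-negative random weight with law $G$ (independently). A path is a sequence $(z_0,z_1,\dots)$ of points of $\mathbb Z^2$ with $z_k,z_{k+1}$ joined by an edge; its passage time $T(p)$ is the sum of weights over edges $(z_k,z_{k+1})$ of $p$; $T(u,w)=\inf_pT(p)$ over paths from $u$ to $w$, and a path from $u$ to $w$ attaining the infimum is a geodesic. A path is semi-directed if $z_{k+1}-z_k\in\{(1,0),(0,1),(0,-1)\}$ for all $k$; it is non-self-intersecting if it visits no point twice. *)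

theory Defs
  imports Complex_Main
begin

type_synonym point = "int \<times> int"

text \<open>Horizontal edge weights: w x y is the weight of the edge joining (x,y) and (x+1,y).
  Vertical edges have weight 1.\<close>

definition adjacent :: "point \<Rightarrow> point \<Rightarrow> bool" where
  "adjacent u v \<longleftrightarrow>
     (fst u = fst v \<and> \<bar>snd v - snd u\<bar> = 1) \<or> (snd u = snd v \<and> \<bar>fst v - fst u\<bar> = 1)"

definition edge_weight :: "(int \<Rightarrow> int \<Rightarrow> real) \<Rightarrow> point \<Rightarrow> point \<Rightarrow> real" where
  "edge_weight w u v = (if fst u = fst v then 1 else w (min (fst u) (fst v)) (snd u))"

definition is_path :: "point list \<Rightarrow> bool" where
  "is_path p \<longleftrightarrow> p \<noteq> [] \<and> (\<forall>i. i + 1 < length p \<longrightarrow> adjacent (p ! i) (p ! (i + 1)))"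

definition path_from_to :: "point list \<Rightarrow> point \<Rightarrow> point \<Rightarrow> bool" where
  "path_from_to p u v \<longleftrightarrow> is_path p \<and> hd p = u \<and> last p = v"

definition passage_time :: "(int \<Rightarrow> int \<Rightarrow> real) \<Rightarrow> point list \<Rightarrow> real" where
  "passage_time w p = (\<Sum>i<length p - 1. edge_weight w (p ! i) (p ! (i + 1)))"

definition T :: "(int \<Rightarrow> int \<Rightarrow> real) \<Rightarrow> point \<Rightarrow> point \<Rightarrow> real" where
  "T w u v = Inf {passage_time w p | p. path_from_to p u v}"

definition geodesic :: "(int \<Rightarrow> int \<Rightarrow> real) \<Rightarrow> point list \<Rightarrow> point \<Rightarrow> point \<Rightarrow> bool" where
  "geodesic w p u v \<longleftrightarrow> path_from_to p u v \<and> passage_time w p = T w u v"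

definition semi_directed :: "point list \<Rightarrow> bool" where
  "semi_directed p \<longleftrightarrow> (\<forall>i. i + 1 < length p \<longrightarrow>
     (fst (p ! (i + 1)) - fst (p ! i), snd (p ! (i + 1)) - snd (p ! i)) \<in> {(1, 0), (0, 1), (0, -1)})"

definition non_self_intersecting :: "point list \<Rightarrow> bool" where
  "non_self_intersecting p \<longleftrightarrow> distinct p"

end

theory Submission
  imports Defs
begin

text \<open>By induction along a path from \<open>(a, b)\<close> to \<open>(c, d)\<close>, non-negative weights bound its
  passage time below by the cost of a staircase: rows \<open>r\<^sub>a, \<dots>, r\<^sub>c\<^sub>-\<^sub>1\<close>, paying \<open>w x r\<^sub>x\<close> for the
  step from column \<open>x\<close> to \<open>x + 1\<close> in row \<open>r\<^sub>x\<close> plus the vertical distances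
  \<open>\<bar>r\<^sub>a - b\<bar>, \<bar>r\<^sub>a\<^sub>+\<^sub>1 - r\<^sub>a\<bar>, \<dots>, \<bar>d - r\<^sub>c\<^sub>-\<^sub>1\<bar>\<close>; a step to the left is absorbed by the triangle
  inequality for these distances. The path realising a staircase cost is semi-directed and
  visits no point twice, so it is a geodesic whenever some geodesic costs at least as much.\<close>

lemma successively_iff_nth:
  "successively P xs \<longleftrightarrow> (\<forall>i. i + 1 < length xs \<longrightarrow> P (xs ! i) (xs ! (i + 1)))"
  by (induction P xs rule: successively.induct) (auto simp: nth_Cons split: nat.splits)

lemma is_path_iff_successively: "is_path p \<longleftrightarrow> p \<noteq> [] \<and> successively adjacent p"
  unfolding is_path_def successively_iff_nth ..

lemma is_path_Cons:
  "q \<noteq> [] \<Longrightarrow> is_path (u # q) \<longleftrightarrow> adjacent u (hd q) \<and> is_path q"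
  by (simp add: is_path_iff_successively successively_Cons)

lemma path_from_to_Cons:
  "q \<noteq> [] \<Longrightarrow> path_from_to (u # q) x y \<longleftrightarrow> u = x \<and> adjacent x (hd q) \<and> path_from_to q (hd q) y"
  by (auto simp: path_from_to_def is_path_Cons)

lemma semi_directed_iff_successively:
  "semi_directed p \<longleftrightarrow>
     successively (\<lambda>u v. (fst v - fst u, snd v - snd u) \<in> {(1, 0), (0, 1), (0, -1)}) p"
  unfolding semi_directed_def successively_iff_nth ..

lemma semi_directed_Cons:
  "q \<noteq> [] \<Longrightarrow> semi_directed (u # q) \<longleftrightarrow>
     (fst (hd q) - fst u, snd (hd q) - snd u) \<in> {(1, 0), (0, 1), (0, -1)} \<and> semi_directed q"
  unfolding semi_directed_iff_successively by (simp only: successively_Cons) blast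

lemma passage_time_single [simp]: "passage_time w [u] = 0"
  by (simp add: passage_time_def)

lemma passage_time_Cons:
  assumes "q \<noteq> []"
  shows "passage_time w (u # q) = edge_weight w u (hd q) + passage_time w q"
proof -
  obtain n where n: "length q = Suc n" using assms by (cases q) auto
  have "passage_time w (u # q) = (\<Sum>i<Suc n. edge_weight w ((u # q) ! i) ((u # q) ! (i + 1)))"
    using n by (simp add: passage_time_def)
  also have "\<dots> = edge_weight w u (q ! 0) + (\<Sum>i<n. edge_weight w (q ! i) (q ! (i + 1)))"
    by (subst sum.lessThan_Suc_shift) simp
  finally show ?thesis
    using n assms by (simp add: passage_time_def hd_conv_nth)
qed

lemma passage_time_nonneg:
  "(\<And>x y. w x y \<ge> 0) \<Longrightarrow> passage_time w p \<ge> 0"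
  unfolding passage_time_def edge_weight_def by (intro sum_nonneg) auto

lemma adjacent_cases:
  assumes "adjacent (a, b) v"
  obtains (vertical) b' where "v = (a, b')" "\<bar>b' - b\<bar> = 1" "edge_weight w (a, b) v = 1"
    | (right) "v = (a + 1, b)" "edge_weight w (a, b) v = w a b"
    | (left) "v = (a - 1, b)" "edge_weight w (a, b) v = w (a - 1) b"
  using assms by (cases v) (auto simp: adjacent_def edge_weight_def abs_if split: if_splits)

text \<open>\<open>staircase_cost w a b rs d\<close> is the passage time of the semi-directed path that starts at
  \<open>(a, b)\<close>, in column \<open>a + i\<close> moves vertically to row \<open>rs ! i\<close> and steps right, and finally moves
  vertically to \<open>(a + length rs, d)\<close>.\<close>

fun staircase_cost :: "(int \<Rightarrow> int \<Rightarrow> real) \<Rightarrow> int \<Rightarrow> int \<Rightarrow> int list \<Rightarrow> int \<Rightarrow> real" where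
  "staircase_cost w a b [] d = of_int \<bar>d - b\<bar>"
| "staircase_cost w a b (r # rs) d = of_int \<bar>r - b\<bar> + w a r + staircase_cost w (a + 1) r rs d"

lemma staircase_cost_le_vertical_step:
  "staircase_cost w a b rs d \<le> of_int \<bar>b - b'\<bar> + staircase_cost w a b' rs d"
  by (cases rs) auto

lemma staircase_cost_le_right_step:
  assumes "\<And>x y. w x y \<ge> 0" and "length rs = nat (c - (a + 1))"
  shows "\<exists>rs'. length rs' = nat (c - a) \<and>
    staircase_cost w a b rs' d \<le> w a b + staircase_cost w (a + 1) b rs d"
proof (cases "a < c")
  case True
  then show ?thesis
    using assms(2) by (intro exI[of _ "b # rs"]) auto
next
  case False
  then show ?thesis
    using assms by (intro exI[of _ "[]"]) (auto simp: add.commute[of "w a b"] add_increasing)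
qed

lemma staircase_cost_le_left_step:
  assumes "\<And>x y. w x y \<ge> 0" and "length rs = nat (c - (a - 1))"
  shows "\<exists>rs'. length rs' = nat (c - a) \<and>
    staircase_cost w a b rs' d \<le> w (a - 1) b + staircase_cost w (a - 1) b rs d"
proof (cases rs)
  case Nil
  then show ?thesis
    using assms by (intro exI[of _ "[]"]) auto
next
  case (Cons r rs')
  have "staircase_cost w a b rs' d \<le> of_int \<bar>b - r\<bar> + staircase_cost w a r rs' d"
    by (rule staircase_cost_le_vertical_step)
  moreover have "w (a - 1) b \<ge> 0" "w (a - 1) r \<ge> 0"
    using assms(1) by auto
  ultimately show ?thesis
    using assms(2) Cons by (intro exI[of _ rs']) (auto simp: abs_minus_commute)
qed

lemma passage_time_ge_staircase_cost:
  assumes "\<And>x y. w x y \<ge> 0" and "path_from_to p (a, b) (c, d)"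
  shows "\<exists>rs. length rs = nat (c - a) \<and> staircase_cost w a b rs d \<le> passage_time w p"
  using assms(2)
proof (induction p arbitrary: a b)
  case Nil
  then show ?case by (simp add: path_from_to_def is_path_def)
next
  case (Cons u q)
  show ?case
  proof (cases "q = []")
    case True
    then show ?thesis
      using Cons.prems by (intro exI[of _ "[]"]) (auto simp: path_from_to_def)
  next
    case False
    then have adj: "adjacent (a, b) (hd q)" and q: "path_from_to q (hd q) (c, d)"
      and time: "passage_time w (u # q) = edge_weight w (a, b) (hd q) + passage_time w q"
      using Cons.prems by (auto simp: path_from_to_Cons passage_time_Cons)
    from adj show ?thesis
    proof (cases rule: adjacent_cases[where w = w])
      case (vertical b')
      then obtain rs where "length rs = nat (c - a)" "staircase_cost w a b' rs d \<le> passage_time w q"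
        using Cons.IH q by auto
      then show ?thesis
        using vertical time staircase_cost_le_vertical_step[of w a b rs d b']
        by (intro exI[of _ rs]) (simp add: abs_minus_commute)
    next
      case right
      then obtain rs where "length rs = nat (c - (a + 1))"
        "staircase_cost w (a + 1) b rs d \<le> passage_time w q"
        using Cons.IH q by auto
      then show ?thesis
        using right time staircase_cost_le_right_step[of w rs c a b d, OF assms(1)] by force
    next
      case left
      then obtain rs where "length rs = nat (c - (a - 1))"
        "staircase_cost w (a - 1) b rs d \<le> passage_time w q"
        using Cons.IH q by auto
      then show ?thesis
        using left time staircase_cost_le_left_step[of w rs c a b d, OF assms(1)] by force
    qed
  qed
qed

definition turning_row :: "int list \<Rightarrow> int \<Rightarrow> int" where
  "turning_row rs d = (case rs of [] \<Rightarrow> d | r # _ \<Rightarrow> r)"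

text \<open>The last conjunct confines the staircase to its first vertical run and the columns to the
  right of it; this is what keeps it distinct when a point is prepended.\<close>

definition is_staircase ::
    "(int \<Rightarrow> int \<Rightarrow> real) \<Rightarrow> int \<Rightarrow> int \<Rightarrow> int list \<Rightarrow> int \<Rightarrow> point list \<Rightarrow> bool" where
  "is_staircase w a b rs d q \<longleftrightarrow>
     path_from_to q (a, b) (a + int (length rs), d) \<and> semi_directed q \<and> distinct q \<and>
     passage_time w q = staircase_cost w a b rs d \<and>
     (\<forall>z \<in> set q. a < fst z \<or>
        fst z = a \<and> min b (turning_row rs d) \<le> snd z \<and> snd z \<le> max b (turning_row rs d))"

lemma is_staircase_right_step:
  assumes "is_staircase w (a + 1) r rs d q"
  shows "is_staircase w a r (r # rs) d ((a, r) # q)"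
proof -
  have "q \<noteq> []" "hd q = (a + 1, r)"
    using assms by (auto simp: is_staircase_def path_from_to_def is_path_def)
  moreover have "\<forall>z \<in> set q. a < fst z"
    using assms unfolding is_staircase_def by force
  ultimately show ?thesis
    using assms
    by (auto simp: is_staircase_def path_from_to_Cons semi_directed_Cons passage_time_Cons
        turning_row_def adjacent_def edge_weight_def add.assoc)
qed

lemma is_staircase_vertical_step:
  assumes "is_staircase w a (b + sgn (turning_row rs d - b)) rs d q"
    and "turning_row rs d \<noteq> b"
  shows "is_staircase w a b rs d ((a, b) # q)"
proof -
  define t where "t = turning_row rs d"
  define b' where "b' = b + sgn (t - b)"
  have step: "b' = b + 1 \<and> b < t \<or> b' = b - 1 \<and> t < b"
    using assms(2) by (auto simp: b'_def t_def sgn_if)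
  have q: "q \<noteq> []" "hd q = (a, b')"
    using assms(1) by (auto simp: is_staircase_def path_from_to_def is_path_def b'_def t_def)
  have cost: "staircase_cost w a b rs d = 1 + staircase_cost w a b' rs d"
    using step by (cases rs) (auto simp: t_def turning_row_def)
  have confined: "\<forall>z \<in> set q. a < fst z \<or> fst z = a \<and> min b' t \<le> snd z \<and> snd z \<le> max b' t"
    using assms(1) by (simp add: is_staircase_def b'_def t_def)
  have confined': "\<forall>z \<in> set q. a < fst z \<or> fst z = a \<and> min b t \<le> snd z \<and> snd z \<le> max b t"
    using confined step by fastforce
  have notin: "(a, b) \<notin> set q"
    using confined step by fastforce
  have adj: "adjacent (a, b) (a, b')" and sd: "(0, b' - b) \<in> {(1::int, 0::int), (0, 1), (0, -1)}"
    using step by (auto simp: adjacent_def)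
  show ?thesis
    using assms(1) q cost confined' notin adj sd
    unfolding is_staircase_def t_def[symmetric] b'_def[symmetric]
    by (simp add: path_from_to_Cons semi_directed_Cons passage_time_Cons edge_weight_def)
qed

lemma is_staircase_from_turning_row:
  assumes "\<exists>q. is_staircase w a (turning_row rs d) rs d q"
  shows "\<exists>q. is_staircase w a b rs d q"
proof (induction "nat \<bar>turning_row rs d - b\<bar>" arbitrary: b)
  case 0
  then show ?case using assms by simp
next
  case (Suc n)
  then have "turning_row rs d \<noteq> b"
    and "n = nat \<bar>turning_row rs d - (b + sgn (turning_row rs d - b))\<bar>"
    by (auto simp: sgn_if)
  then show ?case
    using Suc.hyps(1) is_staircase_vertical_step by blast
qed

lemma staircase_exists: "\<exists>q. is_staircase w a b rs d q"
proof (induction rs arbitrary: a b)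
  case Nil
  have "is_staircase w a d [] d [(a, d)]"
    by (simp add: is_staircase_def path_from_to_def is_path_def semi_directed_def turning_row_def)
  then have "\<exists>q. is_staircase w a (turning_row [] d) [] d q"
    by (auto simp: turning_row_def)
  then show ?case
    by (rule is_staircase_from_turning_row)
next
  case (Cons r rs)
  then obtain q where "is_staircase w (a + 1) r rs d q"
    by blast
  then have "is_staircase w a (turning_row (r # rs) d) (r # rs) d ((a, r) # q)"
    unfolding turning_row_def by (simp add: is_staircase_right_step)
  then show ?case
    by (blast intro: is_staircase_from_turning_row)
qed

lemma T_le_passage_time:
  assumes "\<And>x y. w x y \<ge> 0" and "path_from_to p u v"
  shows "T w u v \<le> passage_time w p"
  unfolding T_def
proof (rule cInf_lower)
  show "passage_time w p \<in> {passage_time w p | p. path_from_to p u v}"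
    using assms(2) by blast
  show "bdd_below {passage_time w p | p. path_from_to p u v}"
    using passage_time_nonneg[of w, OF assms(1)] by (intro bdd_belowI[of _ 0]) blast
qed

lemma geodesic_if_passage_time_le:
  assumes "\<And>x y. w x y \<ge> 0" and "geodesic w \<gamma> u v"
    and "path_from_to p u v" and "passage_time w p \<le> passage_time w \<gamma>"
  shows "geodesic w p u v"
  using assms T_le_passage_time[of w, OF assms(1,3)] by (simp add: geodesic_def)

theorem proposition2p1:
  fixes w :: "int \<Rightarrow> int \<Rightarrow> real" and \<gamma> :: "point list" and x1 y1 x2 y2 :: int
  assumes "\<And>x y. w x y \<ge> 0"
    and "geodesic w \<gamma> (x1, y1) (x2, y2)"
    and "x2 \<ge> x1"
  shows "\<exists>\<gamma>'. geodesic w \<gamma>' (x1, y1) (x2, y2) \<and> semi_directed \<gamma>' \<and> non_self_intersecting \<gamma>'"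
proof -
  have "path_from_to \<gamma> (x1, y1) (x2, y2)"
    using assms(2) by (simp add: geodesic_def)
  then obtain rs where "length rs = nat (x2 - x1)"
    and "staircase_cost w x1 y1 rs y2 \<le> passage_time w \<gamma>"
    using passage_time_ge_staircase_cost[of w, OF assms(1)] by blast
  moreover obtain q where "is_staircase w x1 y1 rs y2 q"
    using staircase_exists by blast
  ultimately have "path_from_to q (x1, y1) (x2, y2)" "passage_time w q \<le> passage_time w \<gamma>"
    and "semi_directed q" "distinct q"
    using assms(3) by (auto simp: is_staircase_def)
  then show ?thesis
    using geodesic_if_passage_time_le[OF assms(1,2)] by (auto simp: non_self_intersecting_def)
qed

end
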